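(* Let $(A,\cdot)$ and $(B,\circ)$ be nearly associative algebras over a field $\mathbb{K}$ of characteristic $0$. Suppose $(l_A,r_A,B)$ is a bimodule of $(A,\cdot)$ and $(l_B,r_B,A)$ is a bimodule of $(B,\circ)$, where $l_A,r_A:A\to\mathrm{End}(B)$ and $l_B,r_B:B\to\mathrm{End}(A)$ are linear maps satisfying, for all $x,y\in A$ and $a,b\in B$: \begin{align*} &r_B(l_A(x)a)y+y\cdot(r_B(a)x)-(l_B(a)y)\cdot x-l_B(r_A(y)a)x=0,\\ &r_B(a)(x\cdot y)-y\cdot(l_B(a)x)-r_B(r_A(x)a)y=0,\\ &l_B(a)(x\cdot y)-(r_B(a)y)\cdot x-l_B(l_A(y)a)x=0,\\ &r_A(l_B(a)x)b+b\circ(r_A(x)a)-(l_A(x)b)\circ a-l_A(r_B(b)x)a=0,\\ &r_A(x)(a\circ b)-b\circ(l_A(x)a)-r_A(r_B(a)x)b=0,\\ &l_A(x)(a\circ b)-(r_A(x)b)\circ a-l_A(l_B(b)x)a=0. \end{align*} Then $(A\oplus B,\ast)$ is a nearly associative algebra, where $(x+a)\ast(y+b)=(x\cdot y+l_B(a)y+r_B(b)x)+(a\circ b+l_A(x)b+r_A(y)a)$ for all $x,y\in A$, $a,b\in B$.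
   Context: An algebra $(A,\cdot)$ is nearly associative if $x\cdot(y\cdot z)=(z\cdot x)\cdot y$ for all $x,y,z\in A$. A triple $(l,r,V)$, with $V$ a linear space and $l,r:A\to\mathrm{End}(V)$ linear, is a bimodule of $(A,\cdot)$ if for all $x,y\in A$: $l(x)l(y)=r(y)r(x)$, $l(x)r(y)=l(y\cdot x)$, and $r(x)l(y)=r(x\cdot y)$. *)

theory Defs
  imports "HOL-Analysis.Analysis"
begin

definition bilinear_op :: "('k::field \<Rightarrow> 'v::ab_group_add \<Rightarrow> 'v) \<Rightarrow> ('v \<Rightarrow> 'v \<Rightarrow> 'v) \<Rightarrow> bool" where
  "bilinear_op s m \<longleftrightarrow> (\<forall>x. Vector_Spaces.linear s s (m x)) \<and> (\<forall>y. Vector_Spaces.linear s s (\<lambda>x. m x y))"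

definition nearly_assoc_algebra :: "('k::field \<Rightarrow> 'v::ab_group_add \<Rightarrow> 'v) \<Rightarrow> ('v \<Rightarrow> 'v \<Rightarrow> 'v) \<Rightarrow> bool" where
  "nearly_assoc_algebra s m \<longleftrightarrow> vector_space s \<and> bilinear_op s m \<and>
     (\<forall>x y z. m x (m y z) = m (m z x) y)"

definition linear_to_End :: "('k::field \<Rightarrow> 'a::ab_group_add \<Rightarrow> 'a) \<Rightarrow> ('k \<Rightarrow> 'v::ab_group_add \<Rightarrow> 'v) \<Rightarrow> ('a \<Rightarrow> 'v \<Rightarrow> 'v) \<Rightarrow> bool" where
  "linear_to_End sA sV l \<longleftrightarrow> (\<forall>x. Vector_Spaces.linear sV sV (l x)) \<and> (\<forall>v. Vector_Spaces.linear sA sV (\<lambda>x. l x v))"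

definition bimodule :: "('k::field \<Rightarrow> 'a::ab_group_add \<Rightarrow> 'a) \<Rightarrow> ('a \<Rightarrow> 'a \<Rightarrow> 'a) \<Rightarrow> ('k \<Rightarrow> 'v::ab_group_add \<Rightarrow> 'v) \<Rightarrow> ('a \<Rightarrow> 'v \<Rightarrow> 'v) \<Rightarrow> ('a \<Rightarrow> 'v \<Rightarrow> 'v) \<Rightarrow> bool" where
  "bimodule sA m sV l r \<longleftrightarrow> vector_space sV \<and> linear_to_End sA sV l \<and> linear_to_End sA sV r \<and>
     (\<forall>x y. l x \<circ> l y = r y \<circ> r x \<and> l x \<circ> r y = l (m y x) \<and> r x \<circ> l y = r (m x y))"

definition sum_scale :: "('k \<Rightarrow> 'a \<Rightarrow> 'a) \<Rightarrow> ('k \<Rightarrow> 'b \<Rightarrow> 'b) \<Rightarrow> 'k \<Rightarrow> 'a \<times> 'b \<Rightarrow> 'a \<times> 'b" where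
  "sum_scale sA sB c p = (sA c (fst p), sB c (snd p))"

end

(* Compare the two components of p * (q * r) and (r * p) * q separately.  After expanding by
   biadditivity, the A-component consists of nine terms on each side: four pairs agree by
   near-associativity of A and the bimodule laws of (l_B, r_B, A), and the remaining five
   are balanced exactly by the first three compatibility conditions.  Exchanging the roles of
   A and B swaps the two components of the product and the conditions 1-3 with 4-6, so the
   B-component is the same computation. *)

theory Submission
  imports Defs
begin

definition biadditive :: "('a::ab_group_add \<Rightarrow> 'b::ab_group_add \<Rightarrow> 'c::ab_group_add) \<Rightarrow> bool" where
  "biadditive f \<longleftrightarrow> (\<forall>x. Modules.additive (f x)) \<and> (\<forall>y. Modules.additive (\<lambda>x. f x y))"

lemma biadditive_add:
  assumes "biadditive f"
  shows "f x (u + v) = f x u + f x v" and "f (x + y) u = f x u + f y u"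
  using assms Modules.additive.add[of "f x" u v] Modules.additive.add[of "\<lambda>x. f x u" x y]
  by (auto simp: biadditive_def)

lemma bilinear_op_iff_linear_to_End: "bilinear_op s m \<longleftrightarrow> linear_to_End s s m"
  by (simp add: bilinear_op_def linear_to_End_def)

lemma linear_to_End_imp_biadditive: "linear_to_End sA sV l \<Longrightarrow> biadditive l"
  by (simp add: linear_to_End_def biadditive_def Modules.additive_def Vector_Spaces.linear_iff)

lemma linear_to_End_scale:
  assumes "linear_to_End sA sV l"
  shows "l x (sV c u) = sV c (l x u)" and "l (sA c x) u = sV c (l x u)"
  using assms by (auto simp: linear_to_End_def Vector_Spaces.linear_iff)

lemma bimodule_apply:
  assumes "bimodule sA m sV l r"
  shows "l x (l y v) = r y (r x v)" and "l x (r y v) = l (m y x) v" and "r x (l y v) = r (m x y) v"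
  using assms unfolding bimodule_def by (metis comp_apply)+

lemma vector_space_sum_scale:
  assumes "vector_space sA" and "vector_space sB"
  shows "vector_space (sum_scale sA sB)"
  using assms unfolding vector_space_def sum_scale_def by auto

definition matched_pair_mult ::
    "('a \<Rightarrow> 'a \<Rightarrow> 'a::plus) \<Rightarrow> ('b \<Rightarrow> 'b \<Rightarrow> 'b::plus) \<Rightarrow> ('a \<Rightarrow> 'b \<Rightarrow> 'b) \<Rightarrow> ('a \<Rightarrow> 'b \<Rightarrow> 'b) \<Rightarrow>
     ('b \<Rightarrow> 'a \<Rightarrow> 'a) \<Rightarrow> ('b \<Rightarrow> 'a \<Rightarrow> 'a) \<Rightarrow> 'a \<times> 'b \<Rightarrow> 'a \<times> 'b \<Rightarrow> 'a \<times> 'b" where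
  "matched_pair_mult mA mB lA rA lB rB =
     (\<lambda>(x, a) (y, b). (mA x y + lB a y + rB b x, mB a b + lA x b + rA y a))"

lemma matched_pair_mult_swap:
  "prod.swap (matched_pair_mult mA mB lA rA lB rB p q) =
   matched_pair_mult mB mA lB rB lA rA (prod.swap p) (prod.swap q)"
  by (simp add: matched_pair_mult_def case_prod_unfold)

lemma bilinear_op_matched_pair_mult:
  assumes "vector_space sA" and "vector_space sB"
    and "bilinear_op sA mA" and "bilinear_op sB mB"
    and "linear_to_End sA sB lA" and "linear_to_End sA sB rA"
    and "linear_to_End sB sA lB" and "linear_to_End sB sA rB"
  shows "bilinear_op (sum_scale sA sB) (matched_pair_mult mA mB lA rA lB rB)"
proof -
  note ends = assms(3-8)[unfolded bilinear_op_iff_linear_to_End]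
  note linearity = ends[THEN linear_to_End_imp_biadditive, THEN biadditive_add(1)]
    ends[THEN linear_to_End_imp_biadditive, THEN biadditive_add(2)]
    ends[THEN linear_to_End_scale(1)] ends[THEN linear_to_End_scale(2)]
    vector_space.vector_space_assms(1)[OF assms(1)]
    vector_space.vector_space_assms(1)[OF assms(2)]
  have "vector_space (sum_scale sA sB)"
    using assms(1,2) by (rule vector_space_sum_scale)
  then show ?thesis
    unfolding bilinear_op_def Vector_Spaces.linear_iff
    by (simp add: matched_pair_mult_def sum_scale_def case_prod_unfold linearity add_ac)
qed

lemma fst_matched_pair_mult_nearly_assoc:
  fixes mA :: "'a::ab_group_add \<Rightarrow> 'a \<Rightarrow> 'a" and mB :: "'b::ab_group_add \<Rightarrow> 'b \<Rightarrow> 'b"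
    and lA rA :: "'a \<Rightarrow> 'b \<Rightarrow> 'b" and lB rB :: "'b \<Rightarrow> 'a \<Rightarrow> 'a"
  assumes nearly_assoc: "\<And>x y z. mA x (mA y z) = mA (mA z x) y"
    and "biadditive mA" and "biadditive lB" and "biadditive rB"
    and bimodule: "\<And>a b x. lB a (lB b x) = rB b (rB a x)"
      "\<And>a b x. lB a (rB b x) = lB (mB b a) x" "\<And>a b x. rB a (lB b x) = rB (mB a b) x"
    and c1: "\<And>x y a. rB (lA x a) y + mA y (rB a x) - mA (lB a y) x - lB (rA y a) x = 0"
    and c2: "\<And>x y a. rB a (mA x y) - mA y (lB a x) - rB (rA x a) y = 0"
    and c3: "\<And>x y a. lB a (mA x y) - mA (rB a y) x - lB (lA y a) x = 0"
  defines "M \<equiv> matched_pair_mult mA mB lA rA lB rB"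
  shows "fst (M p (M q r)) = fst (M (M r p) q)"
proof -
  obtain x a y b z c where pqr: "p = (x, a)" "q = (y, b)" "r = (z, c)"
    by (metis prod.exhaust)
  note additivity = assms(2-4)[THEN biadditive_add(1)] assms(2-4)[THEN biadditive_add(2)]
  have lhs: "fst (M p (M q r)) =
      mA x (mA y z) + mA x (lB b z) + mA x (rB c y) + lB a (mA y z) + lB a (lB b z)
      + lB a (rB c y) + rB (mB b c) x + rB (lA y c) x + rB (rA z b) x"
    by (simp add: M_def matched_pair_mult_def pqr additivity add_ac)
  have rhs: "fst (M (M r p) q) =
      mA (mA z x) y + mA (lB c x) y + mA (rB a z) y + lB (mB c a) y + lB (lA z a) y
      + lB (rA x c) y + rB b (mA z x) + rB b (lB c x) + rB b (rB a z)"
    by (simp add: M_def matched_pair_mult_def pqr additivity add_ac)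
  have "rB (lA y c) x + mA x (rB c y) = mA (lB c x) y + lB (rA x c) y"
    using c1[where x = y and y = x and a = c] by (simp add: algebra_simps)
  moreover have "rB b (mA z x) = mA x (lB b z) + rB (rA z b) x"
    using c2[where x = z and y = x and a = b] by (simp add: algebra_simps)
  moreover have "lB a (mA y z) = mA (rB a z) y + lB (lA z a) y"
    using c3[where x = y and y = z and a = a] by (simp add: algebra_simps)
  ultimately show ?thesis
    unfolding lhs rhs by (simp add: nearly_assoc bimodule algebra_simps)
qed

theorem mainTheorem7:
  fixes sA :: "'k::field_char_0 \<Rightarrow> 'a::ab_group_add \<Rightarrow> 'a"
    and sB :: "'k \<Rightarrow> 'b::ab_group_add \<Rightarrow> 'b"
    and mA :: "'a \<Rightarrow> 'a \<Rightarrow> 'a"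
    and mB :: "'b \<Rightarrow> 'b \<Rightarrow> 'b"
    and lA rA :: "'a \<Rightarrow> 'b \<Rightarrow> 'b"
    and lB rB :: "'b \<Rightarrow> 'a \<Rightarrow> 'a"
  assumes A: "nearly_assoc_algebra sA mA"
    and B: "nearly_assoc_algebra sB mB"
    and bimA: "bimodule sA mA sB lA rA"
    and bimB: "bimodule sB mB sA lB rB"
    and c1: "\<And>x y a. rB (lA x a) y + mA y (rB a x) - mA (lB a y) x - lB (rA y a) x = 0"
    and c2: "\<And>x y a. rB a (mA x y) - mA y (lB a x) - rB (rA x a) y = 0"
    and c3: "\<And>x y a. lB a (mA x y) - mA (rB a y) x - lB (lA y a) x = 0"
    and c4: "\<And>x a b. rA (lB a x) b + mB b (rA x a) - mB (lA x b) a - lA (rB b x) a = 0"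
    and c5: "\<And>x a b. rA x (mB a b) - mB b (lA x a) - rA (rB a x) b = 0"
    and c6: "\<And>x a b. lA x (mB a b) - mB (rA x b) a - lA (lB b x) a = 0"
  shows "nearly_assoc_algebra (sum_scale sA sB)
           (\<lambda>(x, a) (y, b). (mA x y + lB a y + rB b x, mB a b + lA x b + rA y a))"
proof -
  let ?M = "matched_pair_mult mA mB lA rA lB rB"
  let ?M' = "matched_pair_mult mB mA lB rB lA rA"
  have vs: "vector_space sA" "vector_space sB"
    and bil: "bilinear_op sA mA" "bilinear_op sB mB"
    and assoc: "\<And>x y z. mA x (mA y z) = mA (mA z x) y" "\<And>x y z. mB x (mB y z) = mB (mB z x) y"
    using A B by (auto simp: nearly_assoc_algebra_def)
  have ends: "linear_to_End sA sB lA" "linear_to_End sA sB rA"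
      "linear_to_End sB sA lB" "linear_to_End sB sA rB"
    using bimA bimB by (auto simp: bimodule_def)
  have biadd: "biadditive mA" "biadditive mB" "biadditive lA" "biadditive rA"
      "biadditive lB" "biadditive rB"
    using bil ends by (simp_all add: bilinear_op_iff_linear_to_End linear_to_End_imp_biadditive)
  have "fst (?M p (?M q r)) = fst (?M (?M r p) q)" for p q r
    by (rule fst_matched_pair_mult_nearly_assoc[OF assoc(1) biadd(1,5,6) bimodule_apply[OF bimB] c1 c2 c3])
  moreover have "snd (?M p (?M q r)) = snd (?M (?M r p) q)" for p q r
    using fst_matched_pair_mult_nearly_assoc[OF assoc(2) biadd(2,3,4) bimodule_apply[OF bimA] c4 c5 c6,
        of "prod.swap p" "prod.swap q" "prod.swap r"]
    by (metis matched_pair_mult_swap fst_swap)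
  ultimately have "?M p (?M q r) = ?M (?M r p) q" for p q r
    by (simp add: prod_eq_iff)
  then show ?thesis
    using vector_space_sum_scale[OF vs] bilinear_op_matched_pair_mult[OF vs bil ends]
    by (simp add: nearly_assoc_algebra_def matched_pair_mult_def)
qed

end
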